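(* For all integers $k,\ell_1,\ell_2\ge 0$ with $\ell_1+\ell_2\ge k>0$, \[ y_{k,\ell_1,\ell_2}=y_{k-1,\ell_1,\ell_2}+y_{k,\ell_1-1,\ell_2}+(2\ell_2+\ell_1+k-1)\,y_{k,\ell_1,\ell_2-1}, \] and moreover $y_{0,0,0}=1$.
   Context: For integers $k,\ell_1,\ell_2\ge 0$ with $N:=\ell_1+\ell_2\ge k$, a Young tableau with walls and holes of type $(k,\ell_1,\ell_2)$ consists of a subset $S\subseteq\{1,\dots,N\}$ with $|S|=\ell_2$ together with a bijective filling of the cells of the following three-row shape with the integers $1,\dots,k+\ell_1+2\ell_2$: the top row has cells in columns $1,\dots,k$, the middle row has cells in columns $1,\dots,N$, and the bottom row has cells exactly in the columns belonging to $S$. The filling must increase from left to right along the top row and along the middle row, and increase from bottom to top within every column; no condition is imposed among entries of the bottom row. $y_{k,\ell_1,\ell_2}$ is the number of such tableaux (pairs $(S,\text{filling})$). By convention $y_{k,\ell_1,\ell_2}=0$ if some index is negative or if $k>\ell_1+\ell_2$. *)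

theory Defs
  imports Main
begin

definition ww_cells :: "nat \<Rightarrow> nat \<Rightarrow> nat set \<Rightarrow> (nat \<times> nat) set" where
  "ww_cells k N S = {(1, j) | j. j \<in> {1..k}} \<union> {(2, j) | j. j \<in> {1..N}} \<union> {(3, j) | j. j \<in> S}"

text \<open>Tableaux with walls and holes of type (k,l1,l2): pairs (S, f) with f a bijective filling
  (extended by 0 outside the shape, so that the set is finite).\<close>
definition ww_tableaux :: "nat \<Rightarrow> nat \<Rightarrow> nat \<Rightarrow> (nat set \<times> (nat \<times> nat \<Rightarrow> nat)) set" where
  "ww_tableaux k l1 l2 =
     {(S, f). S \<subseteq> {1..l1 + l2} \<and> card S = l2 \<and>
        bij_betw f (ww_cells k (l1 + l2) S) {1..k + l1 + 2 * l2} \<and>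
        (\<forall>c. c \<notin> ww_cells k (l1 + l2) S \<longrightarrow> f c = 0) \<and>
        (\<forall>i j. 1 \<le> i \<and> i < j \<and> j \<le> k \<longrightarrow> f (1, i) < f (1, j)) \<and>
        (\<forall>i j. 1 \<le> i \<and> i < j \<and> j \<le> l1 + l2 \<longrightarrow> f (2, i) < f (2, j)) \<and>
        (\<forall>j. 1 \<le> j \<and> j \<le> k \<longrightarrow> f (2, j) < f (1, j)) \<and>
        (\<forall>j \<in> S. f (3, j) < f (2, j))}"

definition y :: "int \<Rightarrow> int \<Rightarrow> int \<Rightarrow> nat" where
  "y k l1 l2 = (if k < 0 \<or> l1 < 0 \<or> l2 < 0 \<or> k > l1 + l2 then 0
                else card (ww_tableaux (nat k) (nat l1) (nat l2)))"

end

theory Submission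
  imports Defs
begin

text \<open>
  A tableau of type (k, l1, l2) is its hole set S together with a linear extension of the cells
  ordered by: rows 1 and 2 increase to the right, columns increase upwards. The largest entry
  k + l1 + 2 l2 occupies a maximal cell, which is the end (1, k) of the top row or, when
  k < l1 + l2 = N, the end (2, N) of the middle row. Deleting (1, k) leaves a tableau of type
  (k - 1, l1, l2). Deleting (2, N) leaves one of type (k, l1 - 1, l2) if column N has no hole;
  otherwise the hole (3, N) becomes incomparable to every other cell, so it may carry any of the
  k + l1 + 2 l2 - 1 remaining values, and standardising the other entries leaves a tableau of
  type (k, l1, l2 - 1).
\<close>

lemma bij_betw_Diff_singleton_iff:
  assumes "c \<in> C" "f c \<in> B"
  shows "bij_betw f (C - {c}) (B - {f c}) \<longleftrightarrow> bij_betw f C B"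
  using notIn_Un_bij_betw3[of c "C - {c}" f "B - {f c}"] assms by (simp add: insert_absorb)

lemma bij_betw_fun_upd_Diff_singleton:
  "bij_betw (f(c := v)) (C - {c}) B \<longleftrightarrow> bij_betw f (C - {c}) B"
  by (rule bij_betw_cong) simp

lemma bij_betw_Diff_singleton_subsets:
  assumes "finite A" "a \<in> A"
  shows "bij_betw (\<lambda>S. S - {a}) {S. S \<subseteq> A \<and> card S = Suc m \<and> a \<in> S} {S. S \<subseteq> A - {a} \<and> card S = m}"
proof (rule bij_betw_byWitness[where f' = "insert a"])
  have fin: "finite S" if "S \<subseteq> A" for S
    using assms(1) that finite_subset by blast
  show "(\<lambda>S. S - {a}) ` {S. S \<subseteq> A \<and> card S = Suc m \<and> a \<in> S} \<subseteq> {S. S \<subseteq> A - {a} \<and> card S = m}"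
  proof (rule image_subsetI)
    fix S assume "S \<in> {S. S \<subseteq> A \<and> card S = Suc m \<and> a \<in> S}"
    with fin show "S - {a} \<in> {S. S \<subseteq> A - {a} \<and> card S = m}"
      by auto
  qed
  show "insert a ` {S. S \<subseteq> A - {a} \<and> card S = m} \<subseteq> {S. S \<subseteq> A \<and> card S = Suc m \<and> a \<in> S}"
  proof (rule image_subsetI)
    fix S assume S: "S \<in> {S. S \<subseteq> A - {a} \<and> card S = m}"
    then have "finite S"
      using fin by blast
    with S assms(2) show "insert a S \<in> {S. S \<subseteq> A \<and> card S = Suc m \<and> a \<in> S}"
      by (auto simp: card_insert_if)
  qed
  show "\<forall>S\<in>{S. S \<subseteq> A \<and> card S = Suc m \<and> a \<in> S}. insert a (S - {a}) = S"
    by auto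
  show "\<forall>S\<in>{S. S \<subseteq> A - {a} \<and> card S = m}. insert a S - {a} = S"
    by auto
qed

lemma sum_subsets_Diff_singleton:
  assumes "finite A" "a \<in> A"
  shows "(\<Sum>S | S \<subseteq> A \<and> card S = m \<and> a \<in> S. g (S - {a})) =
           (if m = 0 then 0 else \<Sum>S | S \<subseteq> A - {a} \<and> card S = m - 1. g S)"
proof (cases m)
  case 0
  have empty: "{S. S \<subseteq> A \<and> card S = 0 \<and> a \<in> S} = {}"
    using assms(1) finite_subset by fastforce
  show ?thesis
    unfolding 0 empty by simp
next
  case (Suc m')
  then show ?thesis
    using sum.reindex_bij_betw[OF bij_betw_Diff_singleton_subsets[OF assms], of g m'] by simp
qed

definition close_gap :: "nat \<Rightarrow> nat \<Rightarrow> nat" where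
  "close_gap v x = (if x < v then x else x - 1)"

definition open_gap :: "nat \<Rightarrow> nat \<Rightarrow> nat" where
  "open_gap v x = (if x < v then x else Suc x)"

lemma close_gap_open_gap [simp]: "close_gap v (open_gap v x) = x"
  by (simp add: close_gap_def open_gap_def)

lemma open_gap_close_gap: "x \<noteq> v \<Longrightarrow> open_gap v (close_gap v x) = x"
  by (auto simp: close_gap_def open_gap_def)

lemma close_gap_0 [simp]: "0 < v \<Longrightarrow> close_gap v 0 = 0"
  and open_gap_0 [simp]: "0 < v \<Longrightarrow> open_gap v 0 = 0"
  by (simp_all add: close_gap_def open_gap_def)

lemma close_gap_less_iff: "a \<noteq> v \<Longrightarrow> b \<noteq> v \<Longrightarrow> close_gap v a < close_gap v b \<longleftrightarrow> a < b"
  by (auto simp: close_gap_def)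

lemma open_gap_less_iff [simp]: "open_gap v a < open_gap v b \<longleftrightarrow> a < b"
  by (auto simp: open_gap_def)

lemma bij_betw_close_gap:
  assumes "v \<in> {1..Suc n}"
  shows "bij_betw (close_gap v) ({1..Suc n} - {v}) {1..n}"
  by (rule bij_betw_byWitness[where f' = "open_gap v"])
    (use assms in \<open>auto simp: close_gap_def open_gap_def\<close>)

lemma bij_betw_open_gap:
  assumes "v \<in> {1..Suc n}"
  shows "bij_betw (open_gap v) {1..n} ({1..Suc n} - {v})"
  by (rule bij_betw_byWitness[where f' = "close_gap v"])
    (use assms in \<open>auto simp: close_gap_def open_gap_def\<close>)

definition linear_extensions :: "('a \<Rightarrow> 'a \<Rightarrow> bool) \<Rightarrow> 'a set \<Rightarrow> ('a \<Rightarrow> nat) set" where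
  "linear_extensions r C =
     {f. bij_betw f C {1..card C} \<and> (\<forall>c. c \<notin> C \<longrightarrow> f c = 0) \<and>
         (\<forall>c\<in>C. \<forall>d\<in>C. r c d \<longrightarrow> f c < f d)}"

lemma linear_extension_range:
  assumes "f \<in> linear_extensions r C" "c \<in> C"
  shows "1 \<le> f c" "f c \<le> card C"
  using assms bij_betw_apply[of f C "{1..card C}" c] by (auto simp: linear_extensions_def)

lemma linear_extension_inj:
  assumes "f \<in> linear_extensions r C"
  shows "inj_on f C"
  using assms by (simp add: linear_extensions_def bij_betw_def)

lemma finite_linear_extensions:
  assumes "finite C"
  shows "finite (linear_extensions r C)"
proof (rule finite_subset)
  show "linear_extensions r C \<subseteq> {f. \<forall>c. (c \<in> C \<longrightarrow> f c \<in> {1..card C}) \<and> (c \<notin> C \<longrightarrow> f c = 0)}"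
  proof clarify
    fix f c assume "f \<in> linear_extensions r C"
    then have "bij_betw f C {1..card C}" "\<forall>c. c \<notin> C \<longrightarrow> f c = 0"
      by (simp_all add: linear_extensions_def)
    then show "(c \<in> C \<longrightarrow> f c \<in> {1..card C}) \<and> (c \<notin> C \<longrightarrow> f c = 0)"
      by (metis bij_betw_apply)
  qed
  show "finite {f. \<forall>c. (c \<in> C \<longrightarrow> f c \<in> {1..card C}) \<and> (c \<notin> C \<longrightarrow> f c = 0)}"
    using finite_set_of_finite_funs[OF assms finite_atLeastAtMost] .
qed

lemma linear_extensions_empty: "linear_extensions r {} = {\<lambda>_. 0}"
  by (auto simp: linear_extensions_def bij_betw_def)

lemma linear_extension_close_gap:
  assumes f: "f \<in> linear_extensions r C" and "finite C" "c \<in> C"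
  shows "(close_gap (f c) \<circ> f)(c := 0) \<in> linear_extensions r (C - {c})"
proof -
  have card: "card C = Suc (card (C - {c}))"
    using assms(2,3) card_Suc_Diff1 by metis
  have fc: "f c \<in> {1..card C}"
    using linear_extension_range[OF f assms(3)] by simp
  have inj: "inj_on f C"
    using linear_extension_inj[OF f] .
  have "bij_betw f (C - {c}) ({1..card C} - {f c})"
    using bij_betw_Diff_singleton_iff[of c C f "{1..card C}"] assms(3) fc f
    by (simp add: linear_extensions_def)
  then have "bij_betw ((close_gap (f c) \<circ> f)(c := 0)) (C - {c}) {1..card (C - {c})}"
    using bij_betw_close_gap[of "f c" "card (C - {c})"] fc card
    by (simp add: bij_betw_trans bij_betw_fun_upd_Diff_singleton)
  moreover have "((close_gap (f c) \<circ> f)(c := 0)) d = 0" if "d \<notin> C - {c}" for d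
    using that f fc by (cases "d = c") (simp_all add: linear_extensions_def)
  moreover have "((close_gap (f c) \<circ> f)(c := 0)) d < ((close_gap (f c) \<circ> f)(c := 0)) e"
    if "d \<in> C - {c}" "e \<in> C - {c}" "r d e" for d e
  proof -
    have "f d \<noteq> f c" "f e \<noteq> f c"
      using that inj assms(3) by (auto dest: inj_onD)
    moreover have "f d < f e"
      using that f by (simp add: linear_extensions_def)
    ultimately show ?thesis
      using that by (simp add: close_gap_less_iff)
  qed
  ultimately show ?thesis
    by (simp add: linear_extensions_def)
qed

lemma linear_extension_open_gap:
  assumes g: "g \<in> linear_extensions r (C - {c})" and "finite C" "c \<in> C"
    and isolated: "\<forall>d\<in>C. \<not> r c d \<and> \<not> r d c" and v: "v \<in> {1..card C}"
  shows "(open_gap v \<circ> g)(c := v) \<in> linear_extensions r C"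
proof -
  have card: "card C = Suc (card (C - {c}))"
    using assms(2,3) card_Suc_Diff1 by metis
  have "bij_betw g (C - {c}) {1..card (C - {c})}"
    using g by (simp add: linear_extensions_def)
  then have "bij_betw (open_gap v \<circ> g) (C - {c}) ({1..card C} - {v})"
    using bij_betw_open_gap[of v "card (C - {c})"] v card by (simp add: bij_betw_trans)
  then have "bij_betw ((open_gap v \<circ> g)(c := v)) C {1..card C}"
    using bij_betw_Diff_singleton_iff[of c C "(open_gap v \<circ> g)(c := v)" "{1..card C}"] assms(3) v
    by (simp add: bij_betw_fun_upd_Diff_singleton)
  moreover have "((open_gap v \<circ> g)(c := v)) d = 0" if "d \<notin> C" for d
    using that g v assms(3) by (auto simp: linear_extensions_def)
  moreover have "((open_gap v \<circ> g)(c := v)) d < ((open_gap v \<circ> g)(c := v)) e"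
    if "d \<in> C" "e \<in> C" "r d e" for d e
  proof -
    have "d \<noteq> c" "e \<noteq> c"
      using that isolated by auto
    then show ?thesis
      using that g by (simp add: linear_extensions_def)
  qed
  ultimately show ?thesis
    by (simp add: linear_extensions_def)
qed

lemma linear_extension_remove_top:
  assumes f: "f \<in> linear_extensions r C" and "finite C" "c \<in> C" "f c = card C"
  shows "f(c := 0) \<in> linear_extensions r (C - {c})"
proof -
  have "(close_gap (f c) \<circ> f)(c := 0) = f(c := 0)"
  proof
    fix d
    have "f d < f c" if "d \<noteq> c"
    proof (cases "d \<in> C")
      case True
      then have "f d \<noteq> f c"
        using that assms(3) linear_extension_inj[OF f] by (auto dest: inj_onD)
      then show ?thesis
        using linear_extension_range(2)[OF f True] assms(4) by simp
    next
      case False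
      then show ?thesis
        using f linear_extension_range(1)[OF f assms(3)] by (simp add: linear_extensions_def)
    qed
    then show "((close_gap (f c) \<circ> f)(c := 0)) d = (f(c := 0)) d"
      by (simp add: close_gap_def)
  qed
  then show ?thesis
    using linear_extension_close_gap[OF assms(1-3)] by simp
qed

lemma linear_extension_add_top:
  assumes g: "g \<in> linear_extensions r (C - {c})" and "finite C" "c \<in> C"
    and maximal: "\<forall>d\<in>C. \<not> r c d"
  shows "g(c := card C) \<in> linear_extensions r C"
proof -
  have "card C = Suc (card (C - {c}))"
    using assms(2,3) card_Suc_Diff1 by metis
  then have card: "{1..card C} - {card C} = {1..card (C - {c})}" "card (C - {c}) < card C"
    by auto
  have "bij_betw (g(c := card C)) (C - {c}) ({1..card C} - {card C})"
    using g card(1) by (simp add: linear_extensions_def bij_betw_fun_upd_Diff_singleton)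
  then have "bij_betw (g(c := card C)) C {1..card C}"
    using bij_betw_Diff_singleton_iff[of c C "g(c := card C)" "{1..card C}"] assms(3) card(2)
    by simp
  moreover have "(g(c := card C)) d = 0" if "d \<notin> C" for d
    using that g assms(3) by (auto simp: linear_extensions_def)
  moreover have "(g(c := card C)) d < (g(c := card C)) e" if "d \<in> C" "e \<in> C" "r d e" for d e
  proof -
    have "d \<noteq> c"
      using that maximal by blast
    then show ?thesis
      using that g linear_extension_range(2)[OF g, of d] card(2)
      by (cases "e = c") (simp_all add: linear_extensions_def)
  qed
  ultimately show ?thesis
    by (simp add: linear_extensions_def)
qed

lemma bij_betw_linear_extensions_remove_maximal:
  assumes "finite C" "c \<in> C" and maximal: "\<forall>d\<in>C. \<not> r c d"
  shows "bij_betw (\<lambda>f. f(c := 0)) {f \<in> linear_extensions r C. f c = card C}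
           (linear_extensions r (C - {c}))"
proof (rule bij_betw_byWitness[where f' = "\<lambda>g. g(c := card C)"])
  show "(\<lambda>f. f(c := 0)) ` {f \<in> linear_extensions r C. f c = card C} \<subseteq> linear_extensions r (C - {c})"
    using linear_extension_remove_top[OF _ assms(1,2)] by (intro image_subsetI) simp
  show "(\<lambda>g. g(c := card C)) ` linear_extensions r (C - {c}) \<subseteq> {f \<in> linear_extensions r C. f c = card C}"
    using linear_extension_add_top[of _ r C c] assms by (intro image_subsetI) simp
  show "\<forall>f\<in>{f \<in> linear_extensions r C. f c = card C}. (f(c := 0))(c := card C) = f"
    by (metis (mono_tags, lifting) fun_upd_idem fun_upd_upd mem_Collect_eq)
  show "\<forall>g\<in>linear_extensions r (C - {c}). (g(c := card C))(c := 0) = g"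
  proof
    fix g assume "g \<in> linear_extensions r (C - {c})"
    then have "g c = 0"
      by (simp add: linear_extensions_def)
    then show "(g(c := card C))(c := 0) = g"
      by auto
  qed
qed

lemma linear_extension_attains_card:
  assumes "f \<in> linear_extensions r C" "finite C" "C \<noteq> {}"
  obtains c where "c \<in> C" "f c = card C"
proof -
  have "f ` C = {1..card C}" "card C > 0"
    using assms card_gt_0_iff[of C] by (simp_all add: linear_extensions_def bij_betw_def)
  then show ?thesis
    using that by (metis atLeastAtMost_iff imageE less_one linorder_not_le order_refl)
qed

lemma linear_extension_top_maximal:
  assumes "f \<in> linear_extensions r C" "c \<in> C" "f c = card C" "d \<in> C"
  shows "\<not> r c d"
proof
  assume "r c d"
  then have "f c < f d"
    using assms(1,2,4) by (simp add: linear_extensions_def)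
  then show False
    using linear_extension_range(2)[OF assms(1,4)] assms(3) by simp
qed

lemma card_linear_extensions_eq_sum_maximal:
  assumes "finite C" "C \<noteq> {}"
  shows "card (linear_extensions r C) =
           (\<Sum>c | c \<in> C \<and> (\<forall>d\<in>C. \<not> r c d). card (linear_extensions r (C - {c})))"
proof -
  let ?M = "{c. c \<in> C \<and> (\<forall>d\<in>C. \<not> r c d)}"
  let ?top = "\<lambda>c. {f \<in> linear_extensions r C. f c = card C}"
  have "linear_extensions r C = (\<Union>c\<in>?M. ?top c)"
  proof (intro equalityI subsetI)
    fix f assume f: "f \<in> linear_extensions r C"
    then obtain c where c: "c \<in> C" "f c = card C"
      using assms by (rule linear_extension_attains_card)
    then have "c \<in> ?M"
      using linear_extension_top_maximal[OF f] by simp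
    with c f show "f \<in> (\<Union>c\<in>?M. ?top c)"
      by blast
  qed auto
  moreover have "card (\<Union>c\<in>?M. ?top c) = (\<Sum>c\<in>?M. card (?top c))"
  proof (rule card_UN_disjoint)
    show "\<forall>c\<in>?M. \<forall>c'\<in>?M. c \<noteq> c' \<longrightarrow> ?top c \<inter> ?top c' = {}"
    proof (intro ballI impI equals0I)
      fix c c' f assume "c \<in> ?M" "c' \<in> ?M" "c \<noteq> c'" "f \<in> ?top c \<inter> ?top c'"
      then show False
        using linear_extension_inj[of f r C] by (metis (mono_tags) IntE inj_onD mem_Collect_eq)
    qed
    show "finite ?M"
      using assms(1) by simp
    show "\<forall>c\<in>?M. finite (?top c)"
      using finite_linear_extensions[OF assms(1)] by simp
  qed
  moreover have "card (?top c) = card (linear_extensions r (C - {c}))" if "c \<in> ?M" for c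
    using bij_betw_linear_extensions_remove_maximal[of C c r] assms(1) that
    by (simp add: bij_betw_same_card)
  ultimately show ?thesis
    by simp
qed

lemma card_linear_extensions_remove_isolated:
  assumes "finite C" "c \<in> C" and isolated: "\<forall>d\<in>C. \<not> r c d \<and> \<not> r d c"
  shows "card (linear_extensions r C) = card C * card (linear_extensions r (C - {c}))"
proof -
  have "bij_betw (\<lambda>f. ((close_gap (f c) \<circ> f)(c := 0), f c))
          (linear_extensions r C) (linear_extensions r (C - {c}) \<times> {1..card C})"
  proof (rule bij_betw_byWitness[where f' = "\<lambda>(g, v). (open_gap v \<circ> g)(c := v)"])
    show "(\<lambda>f. ((close_gap (f c) \<circ> f)(c := 0), f c)) ` linear_extensions r C
            \<subseteq> linear_extensions r (C - {c}) \<times> {1..card C}"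
      using linear_extension_close_gap linear_extension_range assms(1,2) by fastforce
    show "(\<lambda>(g, v). (open_gap v \<circ> g)(c := v)) ` (linear_extensions r (C - {c}) \<times> {1..card C})
            \<subseteq> linear_extensions r C"
      using linear_extension_open_gap[OF _ assms] by auto
    show "\<forall>f\<in>linear_extensions r C.
            (\<lambda>(g, v). (open_gap v \<circ> g)(c := v)) ((close_gap (f c) \<circ> f)(c := 0), f c) = f"
    proof
      fix f assume f: "f \<in> linear_extensions r C"
      have "f d \<noteq> f c" if "d \<noteq> c" for d
        using that f assms(2) linear_extension_range[OF f assms(2)] linear_extension_inj[OF f]
        by (cases "d \<in> C") (auto simp: linear_extensions_def dest: inj_onD)
      then show "(\<lambda>(g, v). (open_gap v \<circ> g)(c := v)) ((close_gap (f c) \<circ> f)(c := 0), f c) = f"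
        by (auto simp: fun_eq_iff open_gap_close_gap)
    qed
    show "\<forall>p\<in>linear_extensions r (C - {c}) \<times> {1..card C}.
            (\<lambda>f. ((close_gap (f c) \<circ> f)(c := 0), f c)) ((\<lambda>(g, v). (open_gap v \<circ> g)(c := v)) p) = p"
    proof
      fix p assume "p \<in> linear_extensions r (C - {c}) \<times> {1..card C}"
      then obtain g v where p: "p = (g, v)" "g \<in> linear_extensions r (C - {c})"
        by blast
      then have "g c = 0"
        by (simp add: linear_extensions_def)
      with p(1) show "(\<lambda>f. ((close_gap (f c) \<circ> f)(c := 0), f c)) ((\<lambda>(g, v). (open_gap v \<circ> g)(c := v)) p) = p"
        by (auto simp: fun_eq_iff)
    qed
  qed
  then show ?thesis
    by (simp add: bij_betw_same_card card_cartesian_product)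
qed

text \<open>Rows are numbered from the top, so \<open>a = b + 1\<close> means that (a, i) lies directly below (b, j).\<close>

fun tableau_less :: "nat \<times> nat \<Rightarrow> nat \<times> nat \<Rightarrow> bool" where
  "tableau_less (a, i) (b, j) \<longleftrightarrow> (a = b \<and> a \<noteq> 3 \<and> i < j) \<or> (a = b + 1 \<and> i = j)"

lemma mem_ww_cells [simp]:
  "(a, j) \<in> ww_cells k N S \<longleftrightarrow>
     (a = 1 \<and> 1 \<le> j \<and> j \<le> k) \<or> (a = 2 \<and> 1 \<le> j \<and> j \<le> N) \<or> (a = 3 \<and> j \<in> S)"
  by (auto simp: ww_cells_def)

lemma finite_ww_cells: "finite S \<Longrightarrow> finite (ww_cells k N S)"
  by (simp add: ww_cells_def)

lemma card_ww_cells: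
  assumes "S \<subseteq> {1..N}"
  shows "card (ww_cells k N S) = k + N + card S"
proof -
  have card_Pair: "card (Pair a ` A) = card A" for a :: nat and A :: "nat set"
    by (rule card_image) (simp add: inj_on_def)
  have "finite S"
    using assms finite_subset by blast
  have "card (Pair 1 ` {1..k} \<union> Pair (2::nat) ` {1..N}) = k + N"
    by (subst card_Un_disjoint) (auto simp: card_Pair)
  with \<open>finite S\<close> have "card (Pair 1 ` {1..k} \<union> Pair 2 ` {1..N} \<union> Pair (3::nat) ` S) = k + N + card S"
    by (subst card_Un_disjoint) (auto simp: card_Pair)
  moreover have "ww_cells k N S = Pair 1 ` {1..k} \<union> Pair 2 ` {1..N} \<union> Pair 3 ` S"
    by (auto simp: ww_cells_def)
  ultimately show ?thesis
    by simp
qed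

lemma tableau_less_ww_cellsE:
  assumes "tableau_less (a, i) (b, j)" "(a, i) \<in> ww_cells k N S" "(b, j) \<in> ww_cells k N S"
  obtains "a = 1" "b = 1" "i < j" | "a = 2" "b = 2" "i < j" | "a = 2" "b = 1" "i = j"
    | "a = 3" "b = 2" "i = j"
  using assms by auto

lemma ww_tableau_rows_if_monotone:
  fixes f :: "nat \<times> nat \<Rightarrow> nat"
  assumes S: "S \<subseteq> {1..N}"
    and f: "f ` ww_cells k N S \<subseteq> {1..n}" "\<forall>c. c \<notin> ww_cells k N S \<longrightarrow> f c = 0"
    and mono: "\<forall>c\<in>ww_cells k N S. \<forall>d\<in>ww_cells k N S. tableau_less c d \<longrightarrow> f c < f d"
  shows "(\<forall>i j. 1 \<le> i \<and> i < j \<and> j \<le> k \<longrightarrow> f (1, i) < f (1, j)) \<and>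
         (\<forall>i j. 1 \<le> i \<and> i < j \<and> j \<le> N \<longrightarrow> f (2, i) < f (2, j)) \<and>
         (\<forall>j. 1 \<le> j \<and> j \<le> k \<longrightarrow> f (2, j) < f (1, j)) \<and>
         (\<forall>j \<in> S. f (3, j) < f (2, j))"
proof -
  have less: "f c < f d" if "c \<in> ww_cells k N S" "d \<in> ww_cells k N S" "tableau_less c d" for c d
    using mono that by blast
  have column: "f (2, j) < f (1, j)" if j: "1 \<le> j" "j \<le> k" for j
  proof (cases "j \<le> N")
    case True
    then show ?thesis
      using j by (intro less) auto
  next
    case False
    then have "f (2, j) = 0"
      using f(2) by simp
    moreover have "f (1, j) \<ge> 1"
      using f(1) j by (simp add: image_subset_iff)
    ultimately show ?thesis
      by simp
  qed
  show ?thesis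
    using S column by (auto intro!: less)
qed

lemma ww_tableau_order_iff:
  fixes f :: "nat \<times> nat \<Rightarrow> nat"
  assumes S: "S \<subseteq> {1..N}"
    and f: "f ` ww_cells k N S \<subseteq> {1..n}" "\<forall>c. c \<notin> ww_cells k N S \<longrightarrow> f c = 0"
  shows "(\<forall>i j. 1 \<le> i \<and> i < j \<and> j \<le> k \<longrightarrow> f (1, i) < f (1, j)) \<and>
         (\<forall>i j. 1 \<le> i \<and> i < j \<and> j \<le> N \<longrightarrow> f (2, i) < f (2, j)) \<and>
         (\<forall>j. 1 \<le> j \<and> j \<le> k \<longrightarrow> f (2, j) < f (1, j)) \<and>
         (\<forall>j \<in> S. f (3, j) < f (2, j))
    \<longleftrightarrow> (\<forall>c\<in>ww_cells k N S. \<forall>d\<in>ww_cells k N S. tableau_less c d \<longrightarrow> f c < f d)"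
    (is "?rows \<longleftrightarrow> ?mono")
proof
  assume rows: ?rows
  have "f (a, i) < f (b, j)"
    if "tableau_less (a, i) (b, j)" "(a, i) \<in> ww_cells k N S" "(b, j) \<in> ww_cells k N S" for a i b j
    using that by (rule tableau_less_ww_cellsE) (use rows that S in auto)
  then show ?mono
    by fast
qed (rule ww_tableau_rows_if_monotone[OF S f])

lemma ww_tableaux_eq_Sigma:
  "ww_tableaux k l1 l2 =
     (SIGMA S:{S. S \<subseteq> {1..l1 + l2} \<and> card S = l2}.
        linear_extensions tableau_less (ww_cells k (l1 + l2) S))"
proof (intro set_eqI)
  fix p :: "nat set \<times> (nat \<times> nat \<Rightarrow> nat)"
  obtain S f where p: "p = (S, f)"
    by fastforce
  show "p \<in> ww_tableaux k l1 l2 \<longleftrightarrow> p \<in> (SIGMA S:{S. S \<subseteq> {1..l1 + l2} \<and> card S = l2}.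
                                          linear_extensions tableau_less (ww_cells k (l1 + l2) S))"
  proof (cases "S \<subseteq> {1..l1 + l2} \<and> card S = l2")
    case True
    then have "card (ww_cells k (l1 + l2) S) = k + l1 + 2 * l2"
      using card_ww_cells by simp
    then show ?thesis
      using True p ww_tableau_order_iff[of S "l1 + l2" f k "k + l1 + 2 * l2"]
      by (auto simp: ww_tableaux_def linear_extensions_def bij_betw_def)
  next
    case False
    then show ?thesis
      using p unfolding ww_tableaux_def by blast
  qed
qed

lemma maximal_ww_cells:
  assumes "1 \<le> k" "k \<le> N" "S \<subseteq> {1..N}"
  shows "{c. c \<in> ww_cells k N S \<and> (\<forall>d\<in>ww_cells k N S. \<not> tableau_less c d)} =
           insert (1, k) (if k < N then {(2, N)} else {})"
proof (intro equalityI subsetI)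
  fix c assume "c \<in> {c. c \<in> ww_cells k N S \<and> (\<forall>d\<in>ww_cells k N S. \<not> tableau_less c d)}"
  then obtain a i where c: "c = (a, i)" "(a, i) \<in> ww_cells k N S"
    and max: "\<And>b j. (b, j) \<in> ww_cells k N S \<Longrightarrow> \<not> tableau_less (a, i) (b, j)"
    by (metis (lifting) mem_Collect_eq surj_pair)
  consider "a = 1" "1 \<le> i" "i \<le> k" | "a = 2" "1 \<le> i" "i \<le> N" | "a = 3" "i \<in> S"
    using c(2) by auto
  then show "c \<in> insert (1, k) (if k < N then {(2, N)} else {})"
  proof cases
    case 1
    then show ?thesis
      using c max[of 1 k] assms by fastforce
  next
    case 2
    then show ?thesis
      using c max[of 2 N] max[of 1 N] assms by fastforce
  next
    case 3
    then show ?thesis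
      using max[of 2 i] assms by auto
  qed
next
  fix c :: "nat \<times> nat"
  assume "c \<in> insert (1, k) (if k < N then {(2, N)} else {})"
  then consider "c = (1, k)" | "c = (2, N)" "k < N"
    by (auto split: if_splits)
  then show "c \<in> {c. c \<in> ww_cells k N S \<and> (\<forall>d\<in>ww_cells k N S. \<not> tableau_less c d)}"
    by cases (use assms in auto)
qed

lemma card_linear_extensions_ww_cells_Diff_corner:
  assumes "k < N" "S \<subseteq> {1..N}"
  shows "card (linear_extensions tableau_less (ww_cells k N S - {(2, N)})) =
           (if N \<in> S
            then (k + N + card S - 1) * card (linear_extensions tableau_less (ww_cells k (N - 1) (S - {N})))
            else card (linear_extensions tableau_less (ww_cells k (N - 1) S)))"
proof (cases "N \<in> S")
  case True
  let ?C = "ww_cells k N S - {(2, N)}"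
  have "finite (ww_cells k N S)"
    using assms(2) finite_subset finite_ww_cells by blast
  then have fin: "finite ?C"
    by simp
  then have "card (linear_extensions tableau_less ?C) =
               card ?C * card (linear_extensions tableau_less (?C - {(3, N)}))"
    using True by (intro card_linear_extensions_remove_isolated) auto
  moreover have "card ?C = k + N + card S - 1"
    using card_ww_cells[OF assms(2)] fin assms(1) by simp
  moreover have "?C - {(3, N)} = ww_cells k (N - 1) (S - {N})"
    using assms by auto
  ultimately show ?thesis
    using True by simp
next
  case False
  then have "ww_cells k N S - {(2, N)} = ww_cells k (N - 1) S"
    using assms by auto
  then show ?thesis
    using False by simp
qed

lemma card_linear_extensions_ww_cells:
  assumes "1 \<le> k" "k \<le> N" "S \<subseteq> {1..N}"
  shows "card (linear_extensions tableau_less (ww_cells k N S)) =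
           card (linear_extensions tableau_less (ww_cells (k - 1) N S)) +
           (if k < N then card (linear_extensions tableau_less (ww_cells k N S - {(2, N)})) else 0)"
proof -
  let ?e = "\<lambda>C. card (linear_extensions tableau_less C)"
  let ?C = "ww_cells k N S"
  have "finite ?C"
    using assms(3) finite_subset finite_ww_cells by blast
  then have "?e ?C = (\<Sum>c\<in>insert (1, k) (if k < N then {(2, N)} else {}). ?e (?C - {c}))"
    using card_linear_extensions_eq_sum_maximal[of ?C tableau_less] maximal_ww_cells[OF assms] assms(1)
    by fastforce
  also have "\<dots> = ?e (?C - {(1, k)}) + (if k < N then ?e (?C - {(2, N)}) else 0)"
    by simp
  also have "?C - {(1, k)} = ww_cells (k - 1) N S"
    using assms(1) by auto
  finally show ?thesis .
qed

definition ww_count :: "nat \<Rightarrow> nat \<Rightarrow> nat \<Rightarrow> nat" where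
  "ww_count k N m =
     (\<Sum>S | S \<subseteq> {1..N} \<and> card S = m. card (linear_extensions tableau_less (ww_cells k N S)))"

lemma card_ww_tableaux: "card (ww_tableaux k l1 l2) = ww_count k (l1 + l2) l2"
proof -
  have "finite {S. S \<subseteq> {1..l1 + l2} \<and> card S = l2}"
    by (rule finite_subset[of _ "Pow {1..l1 + l2}"]) auto
  moreover have "\<forall>S\<in>{S. S \<subseteq> {1..l1 + l2} \<and> card S = l2}.
                   finite (linear_extensions tableau_less (ww_cells k (l1 + l2) S))"
    by (metis (lifting) finite_atLeastAtMost finite_linear_extensions finite_subset finite_ww_cells mem_Collect_eq)
  ultimately show ?thesis
    unfolding ww_tableaux_eq_Sigma ww_count_def by (rule card_SigmaI)
qed

lemma ww_count_eq_0:
  assumes "N < m"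
  shows "ww_count k N m = 0"
proof -
  have "card S \<le> N" if "S \<subseteq> {1..N}" for S :: "nat set"
    using card_mono[OF finite_atLeastAtMost that] by simp
  then have "{S. S \<subseteq> {1..N} \<and> card S = m} = {}"
    using assms by (auto simp: not_le[symmetric])
  then show ?thesis
    unfolding ww_count_def by (simp only: sum.empty)
qed

lemma ww_count_recurrence:
  assumes "1 \<le> k" "k \<le> N"
  shows "ww_count k N m = ww_count (k - 1) N m +
           (if k < N then ww_count k (N - 1) m +
              (if m = 0 then 0 else (k + N + m - 1) * ww_count k (N - 1) (m - 1))
            else 0)"
proof -
  let ?e = "\<lambda>k N S. card (linear_extensions tableau_less (ww_cells k N S))"
  let ?sub = "\<lambda>N m. {S. S \<subseteq> {1..N} \<and> card S = m}"
  have fin: "finite (?sub N m)"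
    by (rule finite_subset[of _ "Pow {1..N}"]) auto
  have range: "{1..N} - {N} = {1..N - 1}"
    by auto
  have "?e k N S = ?e (k - 1) N S +
          (if k < N then (if N \<in> S then (k + N + m - 1) * ?e k (N - 1) (S - {N}) else ?e k (N - 1) S)
           else 0)" if "S \<in> ?sub N m" for S
    using that card_linear_extensions_ww_cells[OF assms, of S]
      card_linear_extensions_ww_cells_Diff_corner[of k N S] by simp
  then have "ww_count k N m =
          (\<Sum>S\<in>?sub N m. ?e (k - 1) N S +
             (if k < N then (if N \<in> S then (k + N + m - 1) * ?e k (N - 1) (S - {N}) else ?e k (N - 1) S)
              else 0))"
    unfolding ww_count_def by (rule sum.cong[OF refl])
  also have "\<dots> = ww_count (k - 1) N m +
                    (if k < N then (\<Sum>S\<in>?sub N m. if N \<in> S then (k + N + m - 1) * ?e k (N - 1) (S - {N})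
                                                  else ?e k (N - 1) S)
                     else 0)"
    by (simp add: sum.distrib ww_count_def)
  also have "(\<Sum>S\<in>?sub N m. if N \<in> S then (k + N + m - 1) * ?e k (N - 1) (S - {N}) else ?e k (N - 1) S) =
               (\<Sum>S \<in> ?sub N m \<inter> {S. N \<in> S}. (k + N + m - 1) * ?e k (N - 1) (S - {N})) +
               (\<Sum>S \<in> ?sub N m \<inter> - {S. N \<in> S}. ?e k (N - 1) S)"
    by (rule sum.If_cases[OF fin])
  also have "?sub N m \<inter> - {S. N \<in> S} = ?sub (N - 1) m"
    using range by blast
  also have "(\<Sum>S \<in> ?sub N m \<inter> {S. N \<in> S}. (k + N + m - 1) * ?e k (N - 1) (S - {N})) =
               (k + N + m - 1) * (\<Sum>S | S \<subseteq> {1..N} \<and> card S = m \<and> N \<in> S. ?e k (N - 1) (S - {N}))"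
    by (simp add: sum_distrib_left Int_def conj_assoc)
  also have "(\<Sum>S | S \<subseteq> {1..N} \<and> card S = m \<and> N \<in> S. ?e k (N - 1) (S - {N})) =
               (if m = 0 then 0 else ww_count k (N - 1) (m - 1))"
    using sum_subsets_Diff_singleton[where A = "{1..N}" and a = N and m = m and g = "?e k (N - 1)"] assms
    unfolding range ww_count_def by simp
  finally show ?thesis
    by (simp add: ww_count_def)
qed

lemma y_eq_ww_count:
  "y k l1 l2 = (if k < 0 \<or> l1 < 0 \<or> l2 < 0 \<or> k > l1 + l2 then 0
                else ww_count (nat k) (nat (l1 + l2)) (nat l2))"
  by (simp add: y_def card_ww_tableaux nat_add_distrib)

lemma y_0_0_0: "y 0 0 0 = 1"
proof -
  have "{S. S \<subseteq> {1..0::nat} \<and> card S = 0} = {{}}" "ww_cells 0 0 {} = {}"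
    by (auto simp: ww_cells_def)
  then show ?thesis
    by (simp add: y_eq_ww_count ww_count_def linear_extensions_empty)
qed

theorem lemma10:
  fixes k l1 l2 :: int
  assumes "0 \<le> l1" and "0 \<le> l2" and "0 < k" and "k \<le> l1 + l2"
  shows "int (y k l1 l2) = int (y (k - 1) l1 l2) + int (y k (l1 - 1) l2)
           + (2 * l2 + l1 + k - 1) * int (y k l1 (l2 - 1))
         \<and> y 0 0 0 = 1"
proof -
  obtain K L1 L2 where KL: "k = int K" "l1 = int L1" "l2 = int L2"
    using assms by (metis nonneg_int_cases less_imp_le)
  have K: "1 \<le> K" "K \<le> L1 + L2"
    using assms KL by auto
  \<comment> \<open>if l1 = 0 every column has a hole, so this branch is empty, like \<open>y k (-1) l2\<close>\<close>
  have "ww_count K (L1 + L2 - 1) L2 = 0" if "L1 = 0"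
    using that K by (intro ww_count_eq_0) simp
  then have "int (ww_count K (L1 + L2) L2) = int (ww_count (K - 1) (L1 + L2) L2)
           + int (y k (l1 - 1) l2) + (2 * l2 + l1 + k - 1) * int (y k l1 (l2 - 1))"
    using ww_count_recurrence[OF K, of L2] K unfolding KL y_eq_ww_count
    by (auto simp: nat_diff_distrib nat_add_distrib of_nat_diff)
  then show ?thesis
    using KL K y_0_0_0 by (simp add: y_eq_ww_count nat_diff_distrib nat_add_distrib)
qed

end
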